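(* Let $D_S>0$, $c_1>0$ and $c_2\ge 0$ be the constants described in the context, and consider, for $t\ge 0$, $$h(t) = e^{tD_S/2} - 1 - \frac{tD_S - c_2}{c_1}.$$ Then there exist $0\le \underline{t} < \overline{t}$ such that $h(t)\le 0$ for all $t\in[\underline{t},\overline{t}]$, where $h(\underline{t}) = h(\overline{t}) = 0$, if and only if $$c_1 < 2 \quad\text{and}\quad c_2 < c_1 - 2\left(1-\log(2/c_1)\right).$$
   Context: Setting: $\mathcal{X}\subset\mathbb{R}^d$ is compact; $f:\mathbb{R}^d\to\mathbb{R}^d$, $g^c:\mathbb{R}^d\to\mathbb{R}^{d\times m}$, $g^{uc}:\mathbb{R}^d\to\mathbb{R}^{d\times p}$, $g=[g^c\ g^{uc}]$, with $f$ and $g$ Lipschitz on $\mathcal{X}$ in the $\infty$-norm with constants $D_f$, $D_g$; $D_S\coloneqq D_f+D_g$. Given $x_0\in\mathcal{X}$ and a target $x_{tg}\in\mathbb{R}^d$, let $g^c_0\coloneqq g^c(x_0)$ (assumed to have full row rank $d$), $g^{uc}_0\coloneqq g^{uc}(x_0)$, and $(g^c_0)^\dagger$ its Moore–Penrose pseudoinverse. All matrix norms are induced $\infty$-norms. Define $c \coloneqq \|f(x_0)\|_\infty + \|g^{uc}_0\|_\infty + D_S\|x_{tg}-x_0\|_\infty$, $c_1 \coloneqq 4c\|(g^c_0)^\dagger\|_\infty$, and $c_2 \coloneqq 4D_S\|(g^c_0)^\dagger\|_\infty\|g^{uc}_0\|_\infty\|\alpha_2\|_\infty$ with $\alpha_2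 = \frac{1}{4}\mathbf{1}_p$ ($\mathbf{1}_p$ the all-ones vector in $\mathbb{R}^p$). *)

theory Defs
  imports Complex_Main
begin

definition h_fun :: "real \<Rightarrow> real \<Rightarrow> real \<Rightarrow> real \<Rightarrow> real" where
  "h_fun DS c1 c2 t = exp (t * DS / 2) - 1 - (t * DS - c2) / c1"

end

theory Submission
  imports Defs "HOL-Analysis.Analysis"
begin

text \<open>Substituting \<open>s = t D_S / 2\<close> turns \<open>h\<close> into \<open>g(s) = e\<^sup>s - 1 - k s + C\<close> with
  \<open>k = 2 / c\<^sub>1\<close> and \<open>C = c\<^sub>2 / c\<^sub>1\<close>. Since \<open>k (1 + s - ln k)\<close> is the tangent of \<open>e\<^sup>s\<close> at
  \<open>ln k\<close>, the convex function \<open>g\<close> has its unique minimum \<open>k - k ln k - 1 + C\<close> at \<open>s = ln k\<close>.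
  Two distinct zeros force this minimum to be negative, and a zero \<open>b > 0\<close> forces \<open>k > 1\<close>,
  because \<open>g(s) > (1 - k) s\<close> for \<open>s > 0\<close>. Conversely, if \<open>k > 1\<close> and the minimum is negative,
  the intermediate value theorem gives a zero in \<open>[0, ln k]\<close> (as \<open>g(0) = C \<ge> 0\<close>) and one in
  \<open>[ln k, 2k]\<close>, and \<open>g \<le> 0\<close> between them by convexity.\<close>

definition nonpos_zero_interval :: "(real \<Rightarrow> real) \<Rightarrow> bool" where
  "nonpos_zero_interval g \<longleftrightarrow>
     (\<exists>a b. 0 \<le> a \<and> a < b \<and> g a = 0 \<and> g b = 0 \<and> (\<forall>s\<in>{a..b}. g s \<le> 0))"

lemma nonpos_zero_interval_rescale_imp:
  assumes "r > 0" and "nonpos_zero_interval g"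
  shows "nonpos_zero_interval (\<lambda>t. g (r * t))"
proof -
  obtain a b where ab: "0 \<le> a" "a < b" "g a = 0" "g b = 0" "\<forall>s\<in>{a..b}. g s \<le> 0"
    using assms(2) unfolding nonpos_zero_interval_def by blast
  have "g (r * t) \<le> 0" if "t \<in> {a / r..b / r}" for t
    using ab(5) that assms(1) by (auto simp: field_simps)
  moreover have "a / r < b / r"
    using ab(2) assms(1) by (simp add: divide_strict_right_mono)
  ultimately show ?thesis
    unfolding nonpos_zero_interval_def using ab assms(1)
    by (intro exI[of _ "a / r"] exI[of _ "b / r"]) auto
qed

lemma nonpos_zero_interval_rescale_iff:
  assumes "r > 0"
  shows "nonpos_zero_interval (\<lambda>t. g (r * t)) \<longleftrightarrow> nonpos_zero_interval g"
  using nonpos_zero_interval_rescale_imp[of r g]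
    nonpos_zero_interval_rescale_imp[of "1 / r" "\<lambda>t. g (r * t)"] assms
  by auto

definition exp_minus_line :: "real \<Rightarrow> real \<Rightarrow> real \<Rightarrow> real" where
  "exp_minus_line k C s = exp s - 1 - k * s + C"

lemma h_fun_eq_exp_minus_line:
  "h_fun DS c1 c2 t = exp_minus_line (2 / c1) (c2 / c1) (DS / 2 * t)"
  unfolding h_fun_def exp_minus_line_def by (simp add: diff_divide_distrib mult_ac)

lemma exp_gt_tangent_line:
  fixes k s :: real
  assumes "k > 0" and "s \<noteq> ln k"
  shows "k * (1 + (s - ln k)) < exp s"
proof -
  have "1 + (s - ln k) < exp (s - ln k)"
    using exp_minus_greater[of "ln k - s"] assms(2) by simp
  also have "exp (s - ln k) = exp s / k"
    using assms(1) by (simp add: exp_diff)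
  finally show ?thesis
    using assms(1) by (simp add: field_simps)
qed

lemma exp_minus_line_at_ln:
  "k > 0 \<Longrightarrow> exp_minus_line k C (ln k) = k - k * ln k - 1 + C"
  by (simp add: exp_minus_line_def)

lemma exp_minus_line_gt_at_ln:
  assumes "k > 0" and "s \<noteq> ln k"
  shows "exp_minus_line k C (ln k) < exp_minus_line k C s"
  using exp_gt_tangent_line[OF assms]
  by (simp add: exp_minus_line_at_ln[OF assms(1)]) (simp add: exp_minus_line_def algebra_simps)

lemma exp_minus_line_pos:
  assumes "C \<ge> 0" and "k \<le> 1" and "s > 0"
  shows "exp_minus_line k C s > 0"
proof -
  have "1 + s < exp s"
    using exp_minus_greater[of "- s"] assms(3) by simp
  moreover have "k * s \<le> s"
    using assms(2,3) by (simp add: mult_le_cancel_right1)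
  ultimately show ?thesis
    using assms(1) unfolding exp_minus_line_def by linarith
qed

lemma exp_minus_line_nonneg_at_double:
  assumes "C \<ge> 0" and "k \<ge> 0"
  shows "exp_minus_line k C (2 * k) \<ge> 0"
  using exp_lower_Taylor_quadratic[of "2 * k"] assms
  by (simp add: exp_minus_line_def power2_eq_square)

lemma convex_on_exp_minus_line: "convex_on A (exp_minus_line k C)" if "convex A"
proof (rule convex_onI[OF _ that])
  fix t x y :: real
  assume "0 < t" "t < 1"
  then have "exp ((1 - t) * x + t * y) \<le> (1 - t) * exp x + t * exp y"
    using convex_onD[OF exp_convex, of t x y] by simp
  then show "exp_minus_line k C ((1 - t) *\<^sub>R x + t *\<^sub>R y)
      \<le> (1 - t) * exp_minus_line k C x + t * exp_minus_line k C y"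
    by (simp add: exp_minus_line_def algebra_simps)
qed

lemma continuous_on_exp_minus_line: "continuous_on A (exp_minus_line k C)"
  unfolding exp_minus_line_def by (intro continuous_intros)

lemma nonpos_zero_interval_exp_minus_line_imp:
  assumes "C \<ge> 0" and "k > 0" and "nonpos_zero_interval (exp_minus_line k C)"
  shows "k > 1" and "k - k * ln k - 1 + C < 0"
proof -
  obtain a b where ab: "0 \<le> a" "a < b" "exp_minus_line k C a = 0" "exp_minus_line k C b = 0"
    using assms(3) unfolding nonpos_zero_interval_def by blast
  show "k > 1"
  proof (rule ccontr)
    assume "\<not> k > 1"
    then have "exp_minus_line k C b > 0"
      using exp_minus_line_pos[OF assms(1)] ab(1,2) by simp
    then show False
      using ab(4) by simp
  qed
  have "a \<noteq> ln k \<or> b \<noteq> ln k"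
    using ab(2) by auto
  then obtain s where s: "s \<noteq> ln k" "exp_minus_line k C s = 0"
    using ab(3,4) by blast
  then show "k - k * ln k - 1 + C < 0"
    using exp_minus_line_gt_at_ln[OF assms(2) s(1), of C] exp_minus_line_at_ln[OF assms(2), of C]
    by simp
qed

lemma nonpos_zero_interval_exp_minus_line:
  assumes "C \<ge> 0" and "k > 1" and "k - k * ln k - 1 + C < 0"
  shows "nonpos_zero_interval (exp_minus_line k C)"
proof -
  let ?g = "exp_minus_line k C"
  have min_neg: "?g (ln k) < 0" and ln_pos: "ln k > 0"
    using assms exp_minus_line_at_ln[of k C] by auto
  have "?g 0 \<ge> 0"
    using assms(1) by (simp add: exp_minus_line_def)
  then obtain a where a: "0 \<le> a" "a \<le> ln k" "?g a = 0"
    using IVT2'[of ?g "ln k" 0 0] min_neg ln_pos continuous_on_exp_minus_line by auto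
  have "ln k < k"
    using assms(2) by simp
  then have "ln k \<le> 2 * k"
    using assms(2) by linarith
  then obtain b where b: "ln k \<le> b" "b \<le> 2 * k" "?g b = 0"
    using IVT'[of ?g "ln k" 0 "2 * k"] min_neg continuous_on_exp_minus_line
      exp_minus_line_nonneg_at_double[OF assms(1), of k] assms(2) by auto
  have "a \<noteq> ln k"
    using a min_neg by auto
  then have "a < b"
    using a b by simp
  have "?g s \<le> 0" if "s \<in> {a..b}" for s
    using convex_on_le_max[of a b ?g s] convex_on_exp_minus_line[of "{a..b}" k C] that a b
    by simp
  then show ?thesis
    unfolding nonpos_zero_interval_def using a b \<open>a < b\<close> by blast
qed

lemma nonpos_zero_interval_exp_minus_line_iff:
  assumes "C \<ge> 0" and "k > 0"
  shows "nonpos_zero_interval (exp_minus_line k C) \<longleftrightarrow> k > 1 \<and> k - k * ln k - 1 + C < 0"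
  using nonpos_zero_interval_exp_minus_line_imp[OF assms]
    nonpos_zero_interval_exp_minus_line[OF assms(1)] by blast

theorem lemma2:
  fixes DS c1 c2 :: real
  assumes "DS > 0" and "c1 > 0" and "c2 \<ge> 0"
  shows "(\<exists>tl tu. 0 \<le> tl \<and> tl < tu \<and> h_fun DS c1 c2 tl = 0 \<and> h_fun DS c1 c2 tu = 0 \<and>
            (\<forall>t\<in>{tl..tu}. h_fun DS c1 c2 t \<le> 0))
         \<longleftrightarrow> (c1 < 2 \<and> c2 < c1 - 2 * (1 - ln (2 / c1)))"
proof -
  define k C where "k = 2 / c1" and "C = c2 / c1"
  have "(\<exists>tl tu. 0 \<le> tl \<and> tl < tu \<and> h_fun DS c1 c2 tl = 0 \<and> h_fun DS c1 c2 tu = 0 \<and>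
            (\<forall>t\<in>{tl..tu}. h_fun DS c1 c2 t \<le> 0))
      \<longleftrightarrow> nonpos_zero_interval (\<lambda>t. exp_minus_line k C (DS / 2 * t))"
    unfolding nonpos_zero_interval_def k_def C_def h_fun_eq_exp_minus_line ..
  also have "\<dots> \<longleftrightarrow> k > 1 \<and> k - k * ln k - 1 + C < 0"
    using nonpos_zero_interval_rescale_iff[of "DS / 2"] nonpos_zero_interval_exp_minus_line_iff
      assms by (simp add: k_def C_def)
  also have "k - k * ln k - 1 + C = (2 - 2 * ln (2 / c1) - c1 + c2) / c1"
    using assms(2) by (simp add: k_def C_def field_simps)
  finally show ?thesis
    using assms(2) by (simp add: k_def divide_less_0_iff field_simps)
qed

end
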